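(* Let $q$ be a prime power and let $V\subseteq GF(q)^n$ be a linear subspace. Then $$\sum_{k=0}^n\frac{|\mathcal{A}_k(V)|}{(q-1)^k\binom{n}{k}}=\frac{(n+1)(q-1)}{q^{1+n-\dim V}}\sum_{k=0}^n\frac{|\mathcal{A}_k(V^\perp)|}{k+1}\left(1-\frac{(-1)^{k+1}}{(q-1)^{k+1}}\right).$$
   Context: The weight ${\rm wt}(x)$ of $x\in GF(q)^n$ is the number of its nonzero coordinates. For $W\subseteq GF(q)^n$, $\mathcal{A}_i(W)=\{x\in W:{\rm wt}(x)=i\}$. $V^\perp=\{u\in GF(q)^n:(u,v)=0\text{ for all }v\in V\}$ with the standard bilinear form $(u,v)=\sum_i u_iv_i$. *)

theory Defs
  imports "HOL-Analysis.Analysis"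
begin

text \<open>Vectors of GF(q)^n are modelled as 'a ^ 'n with 'a a finite field (q = CARD('a))
  and n = CARD('n).\<close>

definition wt :: "'a::zero ^ 'n \<Rightarrow> nat" where
  "wt x = card {i. x $ i \<noteq> 0}"

definition weight_class :: "nat \<Rightarrow> ('a::zero ^ 'n) set \<Rightarrow> ('a ^ 'n) set" ("\<A>") where
  "\<A> i W = {x \<in> W. wt x = i}"

definition bil :: "'a::comm_semiring_1 ^ 'n \<Rightarrow> 'a ^ 'n \<Rightarrow> 'a" where
  "bil u v = (\<Sum>i\<in>UNIV. u $ i * v $ i)"

definition perp :: "('a::comm_semiring_1 ^ 'n) set \<Rightarrow> ('a ^ 'n) set" where
  "perp V = {u. \<forall>v\<in>V. bil u v = 0}"

end

theory Submission
  imports Defs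
begin

text \<open>Let \<open>c(S)\<close> be the number of codewords of \<open>V\<close> with support \<open>S\<close>. Comparing the vectors of
  \<open>V\<close> supported inside \<open>T\<close> with the vectors of \<open>perp V\<close> vanishing on \<open>T\<close> (a local form of
  \<open>|V| |perp V| = q^n\<close>) and inverting over \<open>T\<close> gives
  \<open>|perp V| c(S) = \<Sum>y \<in> perp V. (q - 1)^|S - supp y| (-1)^|S \<inter> supp y|\<close>.
  Against the weights \<open>1 / ((q - 1)^|S| C(n, |S|))\<close> of the left-hand side, each \<open>y\<close> then contributes
  \<open>\<Sum>S. r^|S \<inter> supp y| / C(n, |S|)\<close> with \<open>r = -1/(q - 1)\<close>; an upper Vandermonde identity
  evaluates this to \<open>(n + 1)/(wt y + 1) (1 + r + ... + r^(wt y))\<close>, and a geometric sum together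
  with \<open>|perp V| = q^(n - dim V)\<close> gives the stated form.\<close>

definition supp :: "'a::zero ^ 'n \<Rightarrow> 'n set" where
  "supp x = {i. x $ i \<noteq> 0}"

definition coord_subspace :: "'n set \<Rightarrow> ('a::zero ^ 'n) set" where
  "coord_subspace R = {x. supp x \<subseteq> R}"

definition coord_proj :: "'n set \<Rightarrow> 'a::zero ^ 'n \<Rightarrow> 'a ^ 'n" where
  "coord_proj R x = (\<chi> i. if i \<in> R then x $ i else 0)"

lemma wt_eq_card_supp: "wt x = card (supp x)"
  by (simp add: wt_def supp_def)

lemma bil_commute: "bil u v = bil v u"
  unfolding bil_def by (simp add: mult.commute)

lemma bil_add_left: "bil (x + y) z = bil x z + bil y z"
  unfolding bil_def by (simp add: distrib_right sum.distrib)

lemma bil_scale_left: "bil (c *s x) y = c * bil x y"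
  unfolding bil_def by (simp add: mult.assoc sum_distrib_left)

lemma card_eq_card_kernel_mult_card_image:
  fixes V :: "'b::ab_group_add set" and f :: "'b \<Rightarrow> 'c::ab_group_add"
  assumes "finite V"
    and add_closed: "\<And>x y. x \<in> V \<Longrightarrow> y \<in> V \<Longrightarrow> x + y \<in> V"
    and diff_closed: "\<And>x y. x \<in> V \<Longrightarrow> y \<in> V \<Longrightarrow> x - y \<in> V"
    and f_diff: "\<And>x y. x \<in> V \<Longrightarrow> y \<in> V \<Longrightarrow> f (x - y) = f x - f y"
  shows "card V = card {x\<in>V. f x = 0} * card (f ` V)"
proof -
  have f_add: "f (x + y) = f x + f y" if "x \<in> V" "y \<in> V" for x y
    using f_diff[of "x + y" y] add_closed[OF that] that by simp
  have fibre: "card {x\<in>V. f x = c} = card {x\<in>V. f x = 0}" if "c \<in> f ` V" for c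
  proof -
    obtain x0 where x0: "x0 \<in> V" "f x0 = c" using \<open>c \<in> f ` V\<close> by auto
    have "bij_betw (\<lambda>x. x - x0) {x\<in>V. f x = c} {x\<in>V. f x = 0}"
      by (rule bij_betwI[where g = "\<lambda>x. x + x0"])
        (use x0 diff_closed f_diff add_closed f_add in auto)
    then show ?thesis by (rule bij_betw_same_card)
  qed
  have "card V = (\<Sum>x\<in>V. 1)"
    by simp
  also have "\<dots> = (\<Sum>c\<in>f ` V. \<Sum>x\<in>{x\<in>V. f x = c}. 1)"
    by (rule sum.image_gen[OF \<open>finite V\<close>])
  also have "\<dots> = card {x\<in>V. f x = 0} * card (f ` V)"
    by (simp add: fibre)
  finally show ?thesis .
qed

lemma card_kernel_functional:
  fixes V :: "('a::{field,finite} ^ 'n) set" and f :: "'a ^ 'n \<Rightarrow> 'a"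
  assumes V: "vec.subspace V"
    and f_add: "\<And>x y. f (x + y) = f x + f y"
    and f_scale: "\<And>c x. f (c *s x) = c * f x"
  shows "CARD('a) * card {x\<in>V. f x = 0} = (if \<forall>x\<in>V. f x = 0 then CARD('a) * card V else card V)"
proof (cases "\<forall>x\<in>V. f x = 0")
  case True
  then have "{x\<in>V. f x = 0} = V"
    by auto
  with True show ?thesis
    by simp
next
  case False
  then obtain w where w: "w \<in> V" "f w \<noteq> 0" by auto
  have "f ` V = UNIV"
  proof -
    have "c = f ((c / f w) *s w)" "(c / f w) *s w \<in> V" for c
      using f_scale w V vec.subspace_scale by auto
    then show ?thesis by blast
  qed
  moreover have "card V = card {x\<in>V. f x = 0} * card (f ` V)"
  proof (rule card_eq_card_kernel_mult_card_image)
    show "f (x - y) = f x - f y" for x y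
      using f_add[of "x - y" y] by simp
  qed (use V vec.subspace_add vec.subspace_diff in auto)
  ultimately show ?thesis
    using w by auto
qed

lemma coord_subspace_eq: "coord_subspace R = {x. \<forall>i. i \<notin> R \<longrightarrow> x $ i = 0}"
  by (auto simp: coord_subspace_def supp_def)

lemma subspace_coord_subspace: "vec.subspace (coord_subspace R :: ('a::field ^ 'n) set)"
  unfolding vec.subspace_def coord_subspace_eq by auto

lemma card_coord_subspace: "card (coord_subspace R :: ('a::{field,finite} ^ 'n) set) = CARD('a) ^ card R"
proof -
  have "bij_betw (\<lambda>x. restrict (($) x) R) (coord_subspace R :: ('a ^ 'n) set) (R \<rightarrow>\<^sub>E UNIV)"
  proof (rule bij_betwI[where g = "\<lambda>f. \<chi> i. if i \<in> R then f i else 0"])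
    show "(\<chi> i. if i \<in> R then restrict (($) x) R i else 0) = x" if "x \<in> coord_subspace R" for x :: "'a ^ 'n"
      using that by (auto simp: coord_subspace_eq vec_eq_iff)
    show "restrict (($) (\<chi> i. if i \<in> R then f i else (0 :: 'a))) R = f" if "f \<in> R \<rightarrow>\<^sub>E UNIV" for f
      using that by (auto simp: PiE_def extensional_def)
  qed (auto simp: coord_subspace_eq)
  then show ?thesis
    by (simp add: bij_betw_same_card card_PiE)
qed

lemma card_subspace:
  fixes V :: "('a::{field,finite} ^ 'n) set"
  assumes "vec.subspace V"
  shows "card V = CARD('a) ^ vec.dim V"
proof -
  obtain D :: "'n set" where D: "card D = vec.dim V"
    using obtain_subset_with_card_n[OF dim_subset_UNIV_cart_gen] by metis
  have "vec.dim (coord_subspace D :: ('a ^ 'n) set) = card D"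
    unfolding coord_subspace_eq by (rule dim_substandard_cart)
  then obtain f where "f ` V = (coord_subspace D :: ('a ^ 'n) set)" "inj_on f V"
    using vec.subspace_isomorphism[OF assms subspace_coord_subspace] D by metis
  then show ?thesis
    using card_image card_coord_subspace D by metis
qed

lemma card_field_ge_2: "CARD('a::{field,finite}) \<ge> 2"
  using card_mono[of UNIV "{0::'a, 1}"] by simp

lemma coord_subspace_eq_0_iff_orthogonal:
  fixes x :: "'a::field ^ 'n"
  assumes "x \<in> coord_subspace R"
  shows "x = 0 \<longleftrightarrow> (\<forall>y\<in>coord_subspace R. bil x y = 0)"
proof
  assume orth: "\<forall>y\<in>coord_subspace R. bil x y = 0"
  show "x = 0"
  proof (rule ccontr)
    assume "x \<noteq> 0"
    then obtain i where "x $ i \<noteq> 0"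
      by (auto simp: vec_eq_iff)
    moreover have "i \<in> R"
      using assms calculation by (auto simp: coord_subspace_eq)
    then have "axis i 1 \<in> coord_subspace R"
      by (auto simp: coord_subspace_eq axis_def)
    ultimately show False
      using orth by (auto simp: bil_def axis_def if_distrib cong: if_cong)
  qed
qed (simp add: bil_def)

text \<open>Double count the pairs \<open>(x, y) \<in> U \<times> coord_subspace R\<close> with \<open>bil x y = 0\<close>, using that a
  nonzero linear functional vanishes on exactly a \<open>1/q\<close> fraction of a subspace.\<close>

lemma card_mult_card_orthogonal_in_coord_subspace:
  fixes U :: "('a::{field,finite} ^ 'n) set"
  assumes U: "vec.subspace U" and U_sub: "U \<subseteq> coord_subspace R"
  shows "card U * card {y\<in>coord_subspace R. \<forall>x\<in>U. bil x y = 0} = CARD('a) ^ card R"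
proof -
  define E :: "('a ^ 'n) set" where "E = coord_subspace R"
  define W where "W = {y\<in>E. \<forall>x\<in>U. bil x y = 0}"
  define q N u w where "q = CARD('a)" and "N = card E" and "u = card U" and "w = card W"
  have "q \<ge> 2"
    unfolding q_def by (rule card_field_ge_2)
  have count_by_x: "(\<Sum>x\<in>U. q * card {y\<in>E. bil x y = 0}) = u * N + (q - 1) * N"
  proof -
    have "q * card {y\<in>E. bil x y = 0} = N + (if x = 0 then (q - 1) * N else 0)" if "x \<in> U" for x
      using card_kernel_functional[OF subspace_coord_subspace, of "bil x" R] \<open>q \<ge> 2\<close>
        coord_subspace_eq_0_iff_orthogonal[of x R] that U_sub
      by (auto simp: q_def N_def E_def bil_commute[of x] bil_add_left bil_scale_left algebra_simps)
    moreover have "0 \<in> U"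
      using U vec.subspace_0 by blast
    ultimately show ?thesis
      by (simp add: sum.distrib u_def)
  qed
  have count_by_y: "(\<Sum>y\<in>E. q * card {x\<in>U. bil x y = 0}) = N * u + (q - 1) * u * w"
  proof -
    have "q * card {x\<in>U. bil x y = 0} = u + (if y \<in> W then (q - 1) * u else 0)" if "y \<in> E" for y
      using card_kernel_functional[OF U, of "\<lambda>x. bil x y"] \<open>q \<ge> 2\<close> that
      by (auto simp: q_def u_def W_def bil_add_left bil_scale_left algebra_simps)
    moreover have "W \<subseteq> E"
      by (auto simp: W_def)
    ultimately show ?thesis
      by (simp add: sum.distrib sum.If_cases Int_absorb1 Int_absorb2 N_def w_def)
  qed
  have "(\<Sum>x\<in>U. q * card {y\<in>E. bil x y = 0}) = (\<Sum>y\<in>E. q * card {x\<in>U. bil x y = 0})"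
    using sum.swap_restrict[of U E "\<lambda>_ _. 1::nat" "\<lambda>x y. bil x y = 0"] by (simp flip: sum_distrib_left)
  then have "(q - 1) * N = (q - 1) * (w * u)"
    using count_by_x count_by_y by (simp add: algebra_simps)
  then have "N = w * u"
    using \<open>q \<ge> 2\<close> by simp
  then show ?thesis
    by (simp add: N_def E_def W_def u_def w_def card_coord_subspace)
qed

lemma card_mult_card_perp:
  fixes V :: "('a::{field,finite} ^ 'n) set"
  assumes "vec.subspace V"
  shows "card V * card (perp V) = CARD('a) ^ CARD('n)"
proof -
  have "perp V = {y\<in>coord_subspace UNIV. \<forall>x\<in>V. bil x y = 0}"
    by (auto simp: perp_def coord_subspace_def bil_commute)
  then show ?thesis
    using card_mult_card_orthogonal_in_coord_subspace[OF assms, of UNIV]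
    by (simp add: coord_subspace_def)
qed

lemma card_perp:
  fixes V :: "('a::{field,finite} ^ 'n) set"
  assumes "vec.subspace V"
  shows "card (perp V) = CARD('a) ^ (CARD('n) - vec.dim V)"
proof -
  have "CARD('a) ^ vec.dim V * card (perp V) = CARD('a) ^ vec.dim V * CARD('a) ^ (CARD('n) - vec.dim V)"
    using card_mult_card_perp[OF assms] card_subspace[OF assms] dim_subset_UNIV_cart_gen[where S = V]
    by (simp flip: power_add)
  then show ?thesis
    by simp
qed

lemma coord_proj_linear: "Vector_Spaces.linear (*s) (*s) (coord_proj R :: 'a::field ^ 'n \<Rightarrow> _)"
  by unfold_locales (auto simp: coord_proj_def vec_eq_iff)

lemma card_eq_card_supported_mult_card_coord_proj:
  fixes V :: "('a::{field,finite} ^ 'n) set"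
  assumes V: "vec.subspace V"
  shows "card V = card {x\<in>V. supp x \<subseteq> T} * card (coord_proj (- T) ` V)"
proof -
  have "card V = card {x\<in>V. coord_proj (- T) x = 0} * card (coord_proj (- T) ` V)"
    by (rule card_eq_card_kernel_mult_card_image)
      (use V vec.subspace_add vec.subspace_diff in \<open>auto simp: vec.linear_diff[OF coord_proj_linear]\<close>)
  moreover have "{x\<in>V. coord_proj (- T) x = 0} = {x\<in>V. supp x \<subseteq> T}"
    by (auto simp: coord_proj_def supp_def vec_eq_iff)
  ultimately show ?thesis
    by simp
qed

text \<open>Within the coordinates outside \<open>T\<close>, the orthogonal of the projection of \<open>V\<close> consists of
  the vectors of \<open>perp V\<close> vanishing on \<open>T\<close>.\<close>

lemma card_supported_mult_card_perp:
  fixes V :: "('a::{field,finite} ^ 'n) set"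
  assumes V: "vec.subspace V"
  shows "card {x\<in>V. supp x \<subseteq> T} * card (perp V)
    = CARD('a) ^ card T * card {y\<in>perp V. supp y \<inter> T = {}}"
proof -
  define U where "U = coord_proj (- T) ` V"
  have U: "vec.subspace U"
    unfolding U_def using V by (rule vec.linear_subspace_image[OF coord_proj_linear])
  have U_sub: "U \<subseteq> coord_subspace (- T)"
    by (auto simp: U_def coord_subspace_def supp_def coord_proj_def)
  have card_V: "card V = card {x\<in>V. supp x \<subseteq> T} * card U"
    unfolding U_def using V by (rule card_eq_card_supported_mult_card_coord_proj)
  have "{y\<in>coord_subspace (- T). \<forall>x\<in>U. bil x y = 0} = {y\<in>perp V. supp y \<inter> T = {}}"
  proof -
    have "bil (coord_proj (- T) x) y = bil y x" if "supp y \<subseteq> - T" for x y :: "'a ^ 'n"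
      using that unfolding bil_def coord_proj_def supp_def by (intro sum.cong) auto
    then show ?thesis
      by (auto simp: U_def perp_def coord_subspace_def disjoint_eq_subset_Compl)
  qed
  then have card_U: "card U * card {y\<in>perp V. supp y \<inter> T = {}} = CARD('a) ^ card (- T)"
    using card_mult_card_orthogonal_in_coord_subspace[OF U U_sub] by simp
  have "card U \<noteq> 0"
    using U vec.subspace_0 by (auto simp: card_eq_0_iff)
  moreover have "card {x\<in>V. supp x \<subseteq> T} * card (perp V) * card U
      = CARD('a) ^ card T * card {y\<in>perp V. supp y \<inter> T = {}} * card U"
  proof -
    have "card {x\<in>V. supp x \<subseteq> T} * card (perp V) * card U = CARD('a) ^ CARD('n)"
      using card_mult_card_perp[OF V] card_V by (simp add: ac_simps)
    also have "\<dots> = CARD('a) ^ card T * CARD('a) ^ card (- T)"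
      by (simp add: Compl_eq_Diff_UNIV card_Diff_subset card_mono flip: power_add)
    also have "\<dots> = CARD('a) ^ card T * card {y\<in>perp V. supp y \<inter> T = {}} * card U"
      using card_U by (simp add: ac_simps)
    finally show ?thesis .
  qed
  ultimately show ?thesis
    by simp
qed

lemma prod_if_zero:
  "finite A \<Longrightarrow> (\<Prod>i\<in>A. if P i then c else 0) = (if \<forall>i\<in>A. P i then c ^ card A else (0::'b::comm_semiring_1))"
  by (induction A rule: finite_induct) auto

lemma sum_Pow_alternating_superset_indicator:
  fixes S X :: "'i set"
  assumes S: "finite S"
  shows "(\<Sum>T\<in>Pow S. (-1) ^ card (S - T) * (if X \<subseteq> T then 1 else 0)) = (if X = S then 1 else (0::'b::comm_ring_1))"
proof (cases "X \<subseteq> S")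
  case True
  have "(\<Sum>T\<in>Pow S. (-1) ^ card (S - T) * (if X \<subseteq> T then 1 else 0))
      = (\<Sum>T\<in>Pow S. (\<Prod>i\<in>T. 1) * (\<Prod>i\<in>S - T. if i \<notin> X then -1 else (0::'b)))"
  proof (rule sum.cong[OF refl])
    fix T assume "T \<in> Pow S"
    then have "(\<forall>i\<in>S - T. i \<notin> X) \<longleftrightarrow> X \<subseteq> T"
      using True by auto
    then show "(-1) ^ card (S - T) * (if X \<subseteq> T then 1 else 0)
        = (\<Prod>i\<in>T. 1) * (\<Prod>i\<in>S - T. if i \<notin> X then -1 else (0::'b))"
      using S by (simp add: prod_if_zero)
  qed
  also have "\<dots> = (\<Prod>i\<in>S. 1 + (if i \<notin> X then -1 else 0))"
    by (rule prod_add[OF S, symmetric])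
  also have "\<dots> = (\<Prod>i\<in>S. if i \<in> X then 1 else 0)"
    by (rule prod.cong) auto
  also have "\<dots> = (if X = S then 1 else 0)"
    using True S by (auto simp: prod_if_zero)
  finally show ?thesis .
next
  case False
  then have "X \<noteq> S" "\<And>T. T \<in> Pow S \<Longrightarrow> \<not> X \<subseteq> T"
    by auto
  then show ?thesis
    by simp
qed

lemma sum_Pow_alternating_disjoint_indicator:
  fixes S Y :: "'i set" and c :: "'b::comm_ring_1"
  assumes S: "finite S"
  shows "(\<Sum>T\<in>Pow S. (-1) ^ card (S - T) * c ^ card T * (if Y \<inter> T = {} then 1 else 0))
    = (c - 1) ^ card (S - Y) * (-1) ^ card (S \<inter> Y)"
proof -
  have "(\<Sum>T\<in>Pow S. (-1) ^ card (S - T) * c ^ card T * (if Y \<inter> T = {} then 1 else 0))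
      = (\<Sum>T\<in>Pow S. (\<Prod>i\<in>T. if i \<notin> Y then c else 0) * (\<Prod>i\<in>S - T. -1))"
  proof (rule sum.cong[OF refl])
    fix T assume "T \<in> Pow S"
    then have "finite T"
      using S finite_subset by auto
    moreover have "(\<forall>i\<in>T. i \<notin> Y) \<longleftrightarrow> Y \<inter> T = {}"
      by auto
    ultimately show "(-1) ^ card (S - T) * c ^ card T * (if Y \<inter> T = {} then 1 else 0)
        = (\<Prod>i\<in>T. if i \<notin> Y then c else 0) * (\<Prod>i\<in>S - T. -1)"
      by (simp add: prod_if_zero)
  qed
  also have "\<dots> = (\<Prod>i\<in>S. (if i \<notin> Y then c else 0) + -1)"
    by (rule prod_add[OF S, symmetric])
  also have "\<dots> = (\<Prod>i\<in>S. if i \<notin> Y then c - 1 else -1)"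
    by (rule prod.cong) auto
  also have "\<dots> = (c - 1) ^ card (S - Y) * (-1) ^ card (S \<inter> Y)"
  proof -
    have "S \<inter> {i. i \<notin> Y} = S - Y" "S \<inter> - {i. i \<notin> Y} = S \<inter> Y"
      by auto
    then show ?thesis
      using S by (simp add: prod.If_cases)
  qed
  finally show ?thesis .
qed

lemma card_support_mult_card_perp:
  fixes V :: "('a::{field,finite} ^ 'n) set"
  assumes V: "vec.subspace V"
  shows "of_nat (card {x\<in>V. supp x = S}) * of_nat (card (perp V))
    = (\<Sum>y\<in>perp V. (of_nat CARD('a) - 1) ^ card (S - supp y) * (-1) ^ card (S \<inter> supp y) :: 'b::comm_ring_1)"
proof -
  define q :: 'b where "q = of_nat CARD('a)"
  have card_indicator: "of_nat (card {x\<in>A. P x}) = (\<Sum>x\<in>A. if P x then 1 else (0::'b))"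
    if "finite A" for A :: "'c set" and P
    using that by (simp add: sum.inter_filter[symmetric])
  have "(of_nat (card {x\<in>V. supp x = S}) :: 'b)
      = (\<Sum>x\<in>V. \<Sum>T\<in>Pow S. (-1) ^ card (S - T) * (if supp x \<subseteq> T then 1 else 0))"
    by (simp add: card_indicator sum_Pow_alternating_superset_indicator)
  also have "\<dots> = (\<Sum>T\<in>Pow S. (-1) ^ card (S - T) * of_nat (card {x\<in>V. supp x \<subseteq> T}))"
    by (subst sum.swap) (simp add: card_indicator sum_distrib_left)
  finally have "(of_nat (card {x\<in>V. supp x = S}) :: 'b) * of_nat (card (perp V))
      = (\<Sum>T\<in>Pow S. (-1) ^ card (S - T) * of_nat (card {x\<in>V. supp x \<subseteq> T} * card (perp V)))"
    by (simp add: sum_distrib_right mult.assoc)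
  also have "\<dots> = (\<Sum>T\<in>Pow S. (-1) ^ card (S - T) * q ^ card T * of_nat (card {y\<in>perp V. supp y \<inter> T = {}}))"
    by (simp add: card_supported_mult_card_perp[OF V] q_def mult.assoc)
  also have "\<dots> = (\<Sum>y\<in>perp V. \<Sum>T\<in>Pow S. (-1) ^ card (S - T) * q ^ card T * (if supp y \<inter> T = {} then 1 else 0))"
    by (subst sum.swap) (simp add: card_indicator sum_distrib_left)
  also have "\<dots> = (\<Sum>y\<in>perp V. (q - 1) ^ card (S - supp y) * (-1) ^ card (S \<inter> supp y))"
    by (simp add: sum_Pow_alternating_disjoint_indicator)
  finally show ?thesis
    unfolding q_def .
qed

lemma upper_vandermonde:
  "(\<Sum>s\<le>N. (s choose a) * ((N - s) choose b)) = Suc N choose (a + b + 1)"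
proof (induction N arbitrary: b)
  case 0
  then show ?case
    by (cases a; cases b) auto
next
  case (Suc N)
  show ?case
  proof (cases b)
    case 0
    then show ?thesis
      by (simp add: sum_choose_upper)
  next
    case (Suc b')
    have "(\<Sum>s\<le>Suc N. (s choose a) * ((Suc N - s) choose b))
        = (\<Sum>s\<le>N. (s choose a) * ((Suc N - s) choose b))"
      by (simp add: Suc)
    also have "\<dots> = (\<Sum>s\<le>N. (s choose a) * ((N - s) choose b') + (s choose a) * ((N - s) choose b))"
      by (rule sum.cong) (auto simp: Suc Suc_diff_le algebra_simps)
    also have "\<dots> = Suc (Suc N) choose (a + b + 1)"
      by (simp add: sum.distrib Suc.IH Suc)
    finally show ?thesis .
  qed
qed

lemma choose_mult_choose_div_choose:
  assumes "j \<le> w" "w \<le> n" "m \<le> n - w"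
  shows "real (w choose j) * real ((n - w) choose m) / real (n choose (j + m))
    = real ((j + m) choose j) * real ((n - (j + m)) choose (w - j)) / real (n choose w)"
proof -
  have "n - (j + m) - (w - j) = n - w - m"
    using assms by simp
  then show ?thesis
    using assms by (simp add: binomial_fact field_simps)
qed

lemma sum_choose_div_choose:
  assumes "j \<le> w" "w \<le> n"
  shows "(\<Sum>m\<le>n - w. real (w choose j) * real ((n - w) choose m) / real (n choose (j + m)))
    = real (n + 1) / real (w + 1)"
proof -
  define G where "G s = (s choose j) * ((n - s) choose (w - j))" for s
  have "(\<Sum>m\<le>n - w. real (w choose j) * real ((n - w) choose m) / real (n choose (j + m)))
      = (\<Sum>m\<le>n - w. real (G (j + m)) / real (n choose w))"
    using assms by (intro sum.cong) (simp_all add: choose_mult_choose_div_choose G_def)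
  also have "\<dots> = real (\<Sum>s\<in>(+) j ` {..n - w}. G s) / real (n choose w)"
    by (simp add: sum.reindex sum_divide_distrib)
  also have "(\<Sum>s\<in>(+) j ` {..n - w}. G s) = (\<Sum>s\<le>n. G s)"
  proof (rule sum.mono_neutral_left)
    show "\<forall>s\<in>{..n} - (+) j ` {..n - w}. G s = 0"
    proof
      fix s assume s: "s \<in> {..n} - (+) j ` {..n - w}"
      show "G s = 0"
      proof (cases "s < j")
        case False
        then have "s - j > n - w"
          using s by (metis DiffD2 atMost_iff image_eqI le_add_diff_inverse not_le)
        then have "n - s < w - j"
          using assms False s by auto
        then show ?thesis
          by (simp add: G_def)
      qed (simp add: G_def)
    qed
  qed (use assms in auto)
  also have "\<dots> = Suc n choose Suc w"
    using upper_vandermonde[where N = n and a = j and b = "w - j"] assms by (simp add: G_def)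
  also have "real \<dots> / real (n choose w) = real (n + 1) / real (w + 1)"
  proof -
    have "real (Suc n choose Suc w) * real (Suc w) = real (Suc n) * real (n choose w)"
      by (metis Suc_times_binomial_eq of_nat_mult)
    moreover have "n choose w > 0"
      using assms by simp
    ultimately show ?thesis
      by (simp add: frac_eq_eq del: binomial_Suc_Suc of_nat_Suc)
  qed
  finally show ?thesis .
qed

lemma sum_Pow_by_card:
  assumes "finite Y"
  shows "(\<Sum>A\<in>Pow Y. g (card A)) = (\<Sum>j\<le>card Y. of_nat (card Y choose j) * (g j :: 'b::comm_semiring_1))"
proof -
  have "(\<Sum>A\<in>Pow Y. g (card A)) = (\<Sum>j\<le>card Y. \<Sum>A\<in>{A\<in>Pow Y. card A = j}. g (card A))"
    by (rule sum.group[symmetric]) (use assms in \<open>auto intro: card_mono\<close>)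
  also have "\<dots> = (\<Sum>j\<le>card Y. of_nat (card Y choose j) * g j)"
  proof (rule sum.cong[OF refl])
    fix j
    have "{A\<in>Pow Y. card A = j} = {A. A \<subseteq> Y \<and> card A = j}"
      by auto
    then have "card {A\<in>Pow Y. card A = j} = card Y choose j"
      by (simp add: n_subsets[OF assms])
    then show "(\<Sum>A\<in>{A\<in>Pow Y. card A = j}. g (card A)) = of_nat (card Y choose j) * g j"
      by simp
  qed
  finally show ?thesis .
qed

text \<open>Split \<open>S = A \<union> B\<close> with \<open>A \<subseteq> Y\<close> and \<open>B \<subseteq> U - Y\<close>: by \<open>sum_choose_div_choose\<close>, the terms with
  \<open>card A = j\<close> add up to \<open>r^j (n + 1)/(w + 1)\<close> for every \<open>j\<close>.\<close>

lemma sum_Pow_power_card_Int_div_choose: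
  assumes U: "finite U" and Y_sub: "Y \<subseteq> U"
  shows "(\<Sum>S\<in>Pow U. (r::real) ^ card (S \<inter> Y) / real (card U choose card S))
    = real (card U + 1) / real (card Y + 1) * (\<Sum>j\<le>card Y. r ^ j)"
proof -
  define n w where "n = card U" and "w = card Y"
  have Y: "finite Y"
    using U Y_sub finite_subset by auto
  have card_diff: "card (U - Y) = n - w"
    unfolding n_def w_def using Y_sub Y by (simp add: card_Diff_subset)
  have "w \<le> n"
    unfolding n_def w_def using Y_sub U card_mono by auto
  have "(\<Sum>S\<in>Pow U. r ^ card (S \<inter> Y) / real (n choose card S))
      = (\<Sum>(A, B)\<in>Pow Y \<times> Pow (U - Y). r ^ card A / real (n choose (card A + card B)))"
  proof (rule sum.reindex_bij_witness[where i = "\<lambda>(A, B). A \<union> B" and j = "\<lambda>S. (S \<inter> Y, S - Y)"])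
    fix S assume "S \<in> Pow U"
    then have "finite S"
      using U finite_subset by auto
    then have "card S = card (S \<inter> Y) + card (S - Y)"
      by (metis Int_Diff_disjoint Int_Diff_Un card_Un_disjoint finite_Diff finite_Int)
    then show "(case (S \<inter> Y, S - Y) of (A, B) \<Rightarrow> r ^ card A / real (n choose (card A + card B)))
        = r ^ card (S \<inter> Y) / real (n choose card S)"
      by simp
  qed (use Y_sub in auto)
  also have "\<dots> = (\<Sum>A\<in>Pow Y. \<Sum>B\<in>Pow (U - Y). r ^ card A / real (n choose (card A + card B)))"
    by (simp add: sum.cartesian_product split_beta)
  also have "\<dots> = (\<Sum>A\<in>Pow Y. \<Sum>m\<le>n - w. real ((n - w) choose m) * (r ^ card A / real (n choose (card A + m))))"
    by (rule sum.cong[OF refl])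
      (simp add: sum_Pow_by_card[OF finite_Diff[OF U], where g = "\<lambda>b. r ^ _ / real (n choose (_ + b))"] card_diff)
  also have "\<dots> = (\<Sum>j\<le>w. real (w choose j) * (\<Sum>m\<le>n - w. real ((n - w) choose m) * (r ^ j / real (n choose (j + m)))))"
    unfolding w_def by (rule sum_Pow_by_card[OF Y])
  also have "\<dots> = (\<Sum>j\<le>w. r ^ j * (\<Sum>m\<le>n - w. real (w choose j) * real ((n - w) choose m) / real (n choose (j + m))))"
    by (simp add: sum_distrib_left algebra_simps)
  also have "\<dots> = (\<Sum>j\<le>w. r ^ j * (real (n + 1) / real (w + 1)))"
    using \<open>w \<le> n\<close> by (simp add: sum_choose_div_choose)
  also have "\<dots> = real (n + 1) / real (w + 1) * (\<Sum>j\<le>w. r ^ j)"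
    by (metis mult.commute sum_distrib_right)
  finally show ?thesis
    unfolding n_def w_def .
qed

lemma sum_weight_class:
  fixes W :: "('a::zero ^ 'n) set"
  assumes "finite W"
  shows "(\<Sum>k=0..CARD('n). of_nat (card (\<A> k W)) * g k) = (\<Sum>x\<in>W. g (wt x) :: 'b::semiring_1)"
proof -
  have "(\<Sum>x\<in>W. g (wt x)) = (\<Sum>k=0..CARD('n). \<Sum>x\<in>{x\<in>W. wt x = k}. g (wt x))"
    by (rule sum.group[symmetric]) (auto simp: assms wt_def card_mono)
  then show ?thesis
    by (simp add: weight_class_def)
qed

lemma sum_power_neg_inverse:
  fixes q :: "'b::field"
  assumes "q \<noteq> 0" "q \<noteq> 1"
  shows "(\<Sum>j\<le>w. (-1 / (q - 1)) ^ j) = (q - 1) / q * (1 - (-1) ^ (w + 1) / (q - 1) ^ (w + 1))"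
proof -
  have "-1 / (q - 1) \<noteq> 1"
    using assms by (simp add: field_simps)
  then have "(\<Sum>j\<le>w. (-1 / (q - 1)) ^ j) = ((-1 / (q - 1)) ^ (w + 1) - 1) / (-1 / (q - 1) - 1)"
    by (simp add: geometric_sum lessThan_Suc_atMost[symmetric] del: sum.lessThan_Suc)
  also have "\<dots> = ((-1) ^ (w + 1) / (q - 1) ^ (w + 1) - 1) / (- q / (q - 1))"
  proof -
    have "-1 / (q - 1) - 1 = - q / (q - 1)"
      using assms by (simp add: field_simps)
    then show ?thesis
      by (simp only: power_divide)
  qed
  also have "\<dots> = (q - 1) / q * (1 - (-1) ^ (w + 1) / (q - 1) ^ (w + 1))"
    using assms by (simp add: field_simps)
  finally show ?thesis .
qed

lemma card_perp_mult_sum_inverse_weights: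
  fixes V :: "('a::{field,finite} ^ 'n) set"
  assumes V: "vec.subspace V"
  defines "q \<equiv> real CARD('a)" and "n \<equiv> CARD('n)"
  shows "real (card (perp V)) * (\<Sum>x\<in>V. 1 / ((q - 1) ^ wt x * real (n choose wt x)))
    = real (n + 1) * (q - 1) / q * (\<Sum>y\<in>perp V. 1 / real (wt y + 1) * (1 - (-1) ^ (wt y + 1) / (q - 1) ^ (wt y + 1)))"
proof -
  define r where "r = -1 / (q - 1)"
  have "q \<noteq> 0" "q \<noteq> 1"
    using card_field_ge_2[where 'a = 'a] by (auto simp: q_def)
  have weight_term: "(q - 1) ^ card (S - Y) * (-1) ^ card (S \<inter> Y) / ((q - 1) ^ card S * real (n choose card S))
      = r ^ card (S \<inter> Y) / real (n choose card S)" for S Y :: "'n set"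
  proof -
    have "card S = card (S - Y) + card (S \<inter> Y)"
      by (metis Int_Diff_disjoint Int_Diff_Un card_Un_disjoint finite Un_commute Int_commute)
    moreover have "card S \<le> n"
      unfolding n_def by (rule card_mono) auto
    moreover have "r ^ k = (-1) ^ k / (q - 1) ^ k" for k
      unfolding r_def by (rule power_divide)
    ultimately show ?thesis
      using \<open>q \<noteq> 1\<close> by (simp add: power_add field_simps)
  qed
  have "real (card (perp V)) * (\<Sum>x\<in>V. 1 / ((q - 1) ^ wt x * real (n choose wt x)))
      = (\<Sum>S\<in>UNIV. real (card {x\<in>V. supp x = S}) * real (card (perp V)) / ((q - 1) ^ card S * real (n choose card S)))"
    by (subst sum.group[symmetric, where g = supp and S = V and T = UNIV])
      (auto simp: wt_eq_card_supp sum_distrib_left mult.commute)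
  also have "\<dots> = (\<Sum>S\<in>UNIV. \<Sum>y\<in>perp V. (q - 1) ^ card (S - supp y) * (-1) ^ card (S \<inter> supp y) / ((q - 1) ^ card S * real (n choose card S)))"
    by (simp add: card_support_mult_card_perp[OF V] q_def sum_divide_distrib)
  also have "\<dots> = (\<Sum>y\<in>perp V. \<Sum>S\<in>UNIV. r ^ card (S \<inter> supp y) / real (n choose card S))"
    by (subst sum.swap) (simp only: weight_term)
  also have "\<dots> = (\<Sum>y\<in>perp V. real (n + 1) / real (wt y + 1) * (\<Sum>j\<le>wt y. r ^ j))"
    using sum_Pow_power_card_Int_div_choose[of "UNIV :: 'n set"]
    by (simp add: wt_eq_card_supp n_def)
  also have "\<dots> = real (n + 1) * (q - 1) / q * (\<Sum>y\<in>perp V. 1 / real (wt y + 1) * (1 - (-1) ^ (wt y + 1) / (q - 1) ^ (wt y + 1)))"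
    unfolding r_def sum_power_neg_inverse[OF \<open>q \<noteq> 0\<close> \<open>q \<noteq> 1\<close>] sum_distrib_left
    by (rule sum.cong) (simp_all add: mult_ac)
  finally show ?thesis .
qed

theorem corollary1:
  fixes V :: "('a::{field,finite} ^ 'n) set"
  assumes "vec.subspace V"
  shows "(\<Sum>k=0..CARD('n). real (card (\<A> k V)) /
            ((real CARD('a) - 1) ^ k * real (CARD('n) choose k)))
       = real (CARD('n) + 1) * (real CARD('a) - 1) / real CARD('a) ^ (1 + CARD('n) - vec.dim V)
         * (\<Sum>k=0..CARD('n). real (card (\<A> k (perp V))) / real (k + 1)
              * (1 - (-1) ^ (k + 1) / (real CARD('a) - 1) ^ (k + 1)))"
proof -
  define q n p where "q = real CARD('a)" and "n = CARD('n)" and "p = real (card (perp V))"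
  define A where "A = (\<Sum>x\<in>V. 1 / ((q - 1) ^ wt x * real (n choose wt x)))"
  define B where "B = (\<Sum>y\<in>perp V. 1 / real (wt y + 1) * (1 - (-1) ^ (wt y + 1) / (q - 1) ^ (wt y + 1)))"
  have "q \<ge> 2"
    using card_field_ge_2[where 'a = 'a] by (simp add: q_def)
  have p: "p = q ^ (n - vec.dim V)"
    by (simp add: p_def q_def n_def card_perp[OF assms])
  then have q_power: "q ^ (1 + n - vec.dim V) = q * p"
    using dim_subset_UNIV_cart_gen[where S = V] by (simp add: n_def Suc_diff_le)
  have "p * A = real (n + 1) * (q - 1) / q * B"
    unfolding A_def B_def p_def q_def n_def by (rule card_perp_mult_sum_inverse_weights[OF assms])
  moreover have "p > 0"
    using p \<open>q \<ge> 2\<close> by simp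
  moreover have "(\<Sum>k=0..n. real (card (\<A> k V)) / ((q - 1) ^ k * real (n choose k))) = A"
    using sum_weight_class[of V "\<lambda>k. 1 / ((q - 1) ^ k * real (n choose k))"]
    by (simp add: A_def n_def)
  moreover have "(\<Sum>k=0..n. real (card (\<A> k (perp V))) / real (k + 1) * (1 - (-1) ^ (k + 1) / (q - 1) ^ (k + 1))) = B"
    using sum_weight_class[of "perp V" "\<lambda>k. 1 / real (k + 1) * (1 - (-1) ^ (k + 1) / (q - 1) ^ (k + 1))"]
    by (simp add: B_def n_def)
  ultimately show ?thesis
    unfolding q_def[symmetric] n_def[symmetric] q_power using \<open>q \<ge> 2\<close> by (simp add: field_simps)
qed

end
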